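(* If $\kappa$ is a singular strong limit cardinal, then there is no logic $\mathscr L$ such that $\mathbb L^{-1}_\kappa\le\mathscr L\le\mathbb L^0_\kappa$ and $\mathscr L$ satisfies full substitution.
   Context: A logic $\mathscr L$ assigns to each vocabulary $\tau$ a set $\mathscr L(\tau)$ of sentences and a satisfaction relation, invariant under isomorphism and renaming, with $\mathscr L(\tau_1)\subseteq\mathscr L(\tau_2)$ for $\tau_1\subseteq\tau_2$ and satisfaction depending only on the reduct; a formula $\varphi(\bar x)$ is a sentence in the vocabulary expanded by new constants. $\mathscr L_1\le\mathscr L_2$ means every sentence of $\mathscr L_1(\tau)$ is equivalent (same models) to one of $\mathscr L_2(\tau)$, for every $\tau$. $\mathbb L_{\lambda,\mu}$ is the infinitary logic with conjunctions of fewer than $\lambda$ formulas and quantification over fewer than $\mu$ variables; $\mathbb L^{-1}_\kappa=\bigcup_{\lambda<\kappa}\mathbb L_{\lambda^+,\aleph_0}$ and $\mathbb L^0_\kappa=\bigcup_{\lambda<\kappa}\mathbb L_{\lambda^+,\lambda^+}$. Full substitution: for vocabularies $\tau_1,\tau_2$ and an assignment to each atomic $\tau_2$-formula $\varphi(\bar x)$ (of the forms $P(\bar x)$, $x_0=x_1$, $x_0=F(x_1,\dots,x_n)$) of a formula $\vartheta_\varphi(\bar x)\in\mathscr L(\tau_1)$ with $\vartheta_{x_0=x_1}$ being $x_0=x_1$, and a $\tau_1$-model $M$, let $M[\bar\vartheta]$ be the $\tau_2$-structure with the universe of $M$ interpreting $P$ by $\{\bar a:M\models\vartheta_{P(\bar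 x)}[\bar a]\}$ and $F$ by the function whose graph is defined by $\vartheta_{x_0=F(\bar x)}$ (when this is a function). $\mathscr L$ has full substitution if for every such assignment and every $\psi_2\in\mathscr L(\tau_2)$ there is $\psi_1\in\mathscr L(\tau_1)$ with $M\models\psi_1\iff M[\bar\vartheta]\models\psi_2$ for every $\tau_1$-model $M$ for which $M[\bar\vartheta]$ is defined. *)

theory Defs
  imports Main
begin

definition card_le :: "'a set \<Rightarrow> 'b set \<Rightarrow> bool" where
  "card_le A B \<longleftrightarrow> (card_of A, card_of B) \<in> ordLeq"

definition card_lt :: "'a set \<Rightarrow> 'b set \<Rightarrow> bool" where
  "card_lt A B \<longleftrightarrow> (card_of A, card_of B) \<in> ordLess"

text \<open>The cardinal kappa is represented as the cardinality of a set K.\<close>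

definition singular_card :: "'a set \<Rightarrow> bool" where
  "singular_card K \<longleftrightarrow> infinite K \<and> \<not> regularCard (card_of K)"

definition strong_limit_card :: "'a set \<Rightarrow> bool" where
  "strong_limit_card K \<longleftrightarrow> infinite K \<and> (\<forall>A::'a set. card_lt A K \<longrightarrow> card_lt (Pow A) K)"

text \<open>A symbol is a relation symbol or a function symbol with a name and a
  (finite) arity; constants are 0-ary function symbols. A vocabulary is a set
  of symbols.\<close>

datatype 'n sym = Rel 'n nat | Fun 'n nat

type_synonym 'n vocab = "'n sym set"

record ('n, 'u) struc =
  dom :: "'u set"
  rel :: "'n \<Rightarrow> nat \<Rightarrow> 'u list set"
  fn  :: "'n \<Rightarrow> nat \<Rightarrow> 'u list \<Rightarrow> 'u"

definition tuples :: "'u set \<Rightarrow> nat \<Rightarrow> 'u list set" where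
  "tuples D n = {xs. length xs = n \<and> set xs \<subseteq> D}"

text \<open>tau-structures, in canonical form: symbols outside tau get trivial
  interpretations, so that a tau-structure is determined by its universe and
  its interpretation of the symbols of tau.\<close>

definition is_struc :: "'n vocab \<Rightarrow> ('n, 'u) struc \<Rightarrow> bool" where
  "is_struc \<tau> M \<longleftrightarrow> dom M \<noteq> {}
     \<and> (\<forall>s n. rel M s n \<subseteq> tuples (dom M) n \<and> (Rel s n \<notin> \<tau> \<longrightarrow> rel M s n = {}))
     \<and> (\<forall>s n xs. (Fun s n \<in> \<tau> \<and> xs \<in> tuples (dom M) n \<longrightarrow> fn M s n xs \<in> dom M)
               \<and> (\<not> (Fun s n \<in> \<tau> \<and> xs \<in> tuples (dom M) n) \<longrightarrow> fn M s n xs = undefined))"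

definition reduct :: "'n vocab \<Rightarrow> ('n, 'u) struc \<Rightarrow> ('n, 'u) struc" where
  "reduct \<tau> M = \<lparr>dom = dom M,
     rel = (\<lambda>s n. if Rel s n \<in> \<tau> then rel M s n else {}),
     fn = (\<lambda>s n xs. if Fun s n \<in> \<tau> \<and> xs \<in> tuples (dom M) n then fn M s n xs else undefined)\<rparr>"

definition struc_iso :: "'n vocab \<Rightarrow> ('u \<Rightarrow> 'v) \<Rightarrow> ('n, 'u) struc \<Rightarrow> ('n, 'v) struc \<Rightarrow> bool" where
  "struc_iso \<tau> h M N \<longleftrightarrow> bij_betw h (dom M) (dom N)
     \<and> (\<forall>s n xs. Rel s n \<in> \<tau> \<and> xs \<in> tuples (dom M) n \<longrightarrow> (xs \<in> rel M s n \<longleftrightarrow> map h xs \<in> rel N s n))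
     \<and> (\<forall>s n xs. Fun s n \<in> \<tau> \<and> xs \<in> tuples (dom M) n \<longrightarrow> h (fn M s n xs) = fn N s n (map h xs))"

definition is_renaming :: "('n sym \<Rightarrow> 'n sym) \<Rightarrow> 'n vocab \<Rightarrow> 'n vocab \<Rightarrow> bool" where
  "is_renaming g \<tau> \<tau>' \<longleftrightarrow> bij_betw g \<tau> \<tau>'
     \<and> (\<forall>s n. Rel s n \<in> \<tau> \<longrightarrow> (\<exists>s'. g (Rel s n) = Rel s' n))
     \<and> (\<forall>s n. Fun s n \<in> \<tau> \<longrightarrow> (\<exists>s'. g (Fun s n) = Fun s' n))"

definition renamed :: "('n sym \<Rightarrow> 'n sym) \<Rightarrow> 'n vocab \<Rightarrow> ('n, 'u) struc \<Rightarrow> ('n, 'u) struc \<Rightarrow> bool" where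
  "renamed g \<tau> M M' \<longleftrightarrow> dom M' = dom M
     \<and> (\<forall>s n s'. Rel s n \<in> \<tau> \<and> g (Rel s n) = Rel s' n \<longrightarrow> rel M' s' n = rel M s n)
     \<and> (\<forall>s n s'. Fun s n \<in> \<tau> \<and> g (Fun s n) = Fun s' n \<longrightarrow> fn M' s' n = fn M s n)"

section \<open>Abstract logics\<close>

definition is_logic :: "('n vocab \<Rightarrow> 'x set) \<Rightarrow> (('n, 'u) struc \<Rightarrow> 'x \<Rightarrow> bool) \<Rightarrow> bool" where
  "is_logic Sent sat \<longleftrightarrow>
     (\<forall>\<tau>1 \<tau>2. \<tau>1 \<subseteq> \<tau>2 \<longrightarrow> Sent \<tau>1 \<subseteq> Sent \<tau>2)
   \<and> (\<forall>\<tau> \<phi> M N h. \<phi> \<in> Sent \<tau> \<and> is_struc \<tau> M \<and> is_struc \<tau> N \<and> struc_iso \<tau> h M N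
        \<longrightarrow> (sat M \<phi> \<longleftrightarrow> sat N \<phi>))
   \<and> (\<forall>\<tau> \<tau>' \<phi> M. \<phi> \<in> Sent \<tau> \<and> \<tau> \<subseteq> \<tau>' \<and> is_struc \<tau>' M
        \<longrightarrow> (sat M \<phi> \<longleftrightarrow> sat (reduct \<tau> M) \<phi>))
   \<and> (\<forall>\<tau> \<tau>' g. is_renaming g \<tau> \<tau>' \<longrightarrow>
        (\<forall>\<phi>\<in>Sent \<tau>. \<exists>\<phi>'\<in>Sent \<tau>'. \<forall>M M'. is_struc \<tau> M \<and> is_struc \<tau>' M' \<and> renamed g \<tau> M M'
            \<longrightarrow> (sat M \<phi> \<longleftrightarrow> sat M' \<phi>')))"

section \<open>Full substitution\<close>

text \<open>A formula phi(x1,...,xk) of a logic is a sentence in the vocabulary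
  expanded by k new (pairwise distinct) constants cs; M satisfies it at as iff
  the expansion of M interpreting cs by as satisfies the sentence.\<close>

definition expand_consts :: "('n, 'u) struc \<Rightarrow> 'n list \<Rightarrow> 'u list \<Rightarrow> ('n, 'u) struc" where
  "expand_consts M cs as = M\<lparr>fn := (\<lambda>s n xs.
      if n = 0 \<and> xs = [] \<and> s \<in> set cs then the (map_of (zip cs as) s) else fn M s n xs)\<rparr>"

definition const_vocab :: "'n list \<Rightarrow> 'n vocab" where
  "const_vocab cs = {Fun c 0 | c. c \<in> set cs}"

text \<open>An assignment of formulas: to each symbol of tau2 a list of new
  constants (the variables of the atomic formula: x1..xn for P(x1..xn), and
  x0,x1..xn for x0 = F(x1..xn)) and a sentence of the tau1-vocabulary expanded by
  these constants. The formula assigned to x0 = x1 is x0 = x1 itself.\<close>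

definition subst_assignment ::
  "('n vocab \<Rightarrow> 'x set) \<Rightarrow> 'n vocab \<Rightarrow> 'n vocab \<Rightarrow> ('n sym \<Rightarrow> 'n list \<times> 'x) \<Rightarrow> bool" where
  "subst_assignment Sent \<tau>1 \<tau>2 \<theta> \<longleftrightarrow>
     (\<forall>\<sigma>\<in>\<tau>2. distinct (fst (\<theta> \<sigma>)) \<and> (\<forall>c\<in>set (fst (\<theta> \<sigma>)). Fun c 0 \<notin> \<tau>1)
        \<and> snd (\<theta> \<sigma>) \<in> Sent (\<tau>1 \<union> const_vocab (fst (\<theta> \<sigma>))))
   \<and> (\<forall>s n. Rel s n \<in> \<tau>2 \<longrightarrow> length (fst (\<theta> (Rel s n))) = n)
   \<and> (\<forall>s n. Fun s n \<in> \<tau>2 \<longrightarrow> length (fst (\<theta> (Fun s n))) = Suc n)"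

definition holds_at :: "(('n, 'u) struc \<Rightarrow> 'x \<Rightarrow> bool) \<Rightarrow> ('n, 'u) struc \<Rightarrow> 'n list \<times> 'x \<Rightarrow> 'u list \<Rightarrow> bool" where
  "holds_at sat M \<theta>\<sigma> as \<longleftrightarrow> sat (expand_consts M (fst \<theta>\<sigma>) as) (snd \<theta>\<sigma>)"

definition subst_defined ::
  "(('n, 'u) struc \<Rightarrow> 'x \<Rightarrow> bool) \<Rightarrow> 'n vocab \<Rightarrow> ('n sym \<Rightarrow> 'n list \<times> 'x) \<Rightarrow> ('n, 'u) struc \<Rightarrow> bool" where
  "subst_defined sat \<tau>2 \<theta> M \<longleftrightarrow>
     (\<forall>s n xs. Fun s n \<in> \<tau>2 \<and> xs \<in> tuples (dom M) n \<longrightarrow>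
        (\<exists>!a. a \<in> dom M \<and> holds_at sat M (\<theta> (Fun s n)) (a # xs)))"

definition subst_struc ::
  "(('n, 'u) struc \<Rightarrow> 'x \<Rightarrow> bool) \<Rightarrow> 'n vocab \<Rightarrow> ('n sym \<Rightarrow> 'n list \<times> 'x) \<Rightarrow> ('n, 'u) struc \<Rightarrow> ('n, 'u) struc" where
  "subst_struc sat \<tau>2 \<theta> M = \<lparr>dom = dom M,
     rel = (\<lambda>s n. if Rel s n \<in> \<tau>2 then {as \<in> tuples (dom M) n. holds_at sat M (\<theta> (Rel s n)) as} else {}),
     fn = (\<lambda>s n xs. if Fun s n \<in> \<tau>2 \<and> xs \<in> tuples (dom M) n
              then (THE a. a \<in> dom M \<and> holds_at sat M (\<theta> (Fun s n)) (a # xs)) else undefined)\<rparr>"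

definition full_substitution :: "('n vocab \<Rightarrow> 'x set) \<Rightarrow> (('n, 'u) struc \<Rightarrow> 'x \<Rightarrow> bool) \<Rightarrow> bool" where
  "full_substitution Sent sat \<longleftrightarrow>
     (\<forall>\<tau>1 \<tau>2 \<theta>. subst_assignment Sent \<tau>1 \<tau>2 \<theta> \<longrightarrow>
        (\<forall>\<psi>2\<in>Sent \<tau>2. \<exists>\<psi>1\<in>Sent \<tau>1. \<forall>M. is_struc \<tau>1 M \<and> subst_defined sat \<tau>2 \<theta> M
            \<longrightarrow> (sat M \<psi>1 \<longleftrightarrow> sat (subst_struc sat \<tau>2 \<theta> M) \<psi>2)))"

section \<open>Infinitary logics L_{lambda,mu}\<close>

text \<open>Formulas with variables, conjunction index sets and quantified variable
  sets drawn from 'u. Atomic formulas are (unnested) P(xs), x = y and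
  x0 = F(xs).\<close>

datatype ('n, 'v) ifm =
    RelA 'n "'v list"
  | EqA 'v 'v
  | FunA 'n 'v "'v list"
  | Neg "('n, 'v) ifm"
  | Conj "'v set" "'v \<Rightarrow> ('n, 'v) ifm"
  | Exi "'v set" "('n, 'v) ifm"

primrec isat :: "('n, 'u) ifm \<Rightarrow> ('n, 'u) struc \<Rightarrow> ('u \<Rightarrow> 'u) \<Rightarrow> bool" where
  "isat (RelA P xs) M s = (map s xs \<in> rel M P (length xs))"
| "isat (EqA x y) M s = (s x = s y)"
| "isat (FunA F x ys) M s = (s x = fn M F (length ys) (map s ys))"
| "isat (Neg \<phi>) M s = (\<not> isat \<phi> M s)"
| "isat (Conj I f) M s = (\<forall>i\<in>I. isat (f i) M s)"
| "isat (Exi V \<phi>) M s = (\<exists>s'. (\<forall>x\<in>V. s' x \<in> dom M) \<and> (\<forall>x. x \<notin> V \<longrightarrow> s' x = s x) \<and> isat \<phi> M s')"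

primrec freev :: "('n, 'v) ifm \<Rightarrow> 'v set" where
  "freev (RelA P xs) = set xs"
| "freev (EqA x y) = {x, y}"
| "freev (FunA F x ys) = insert x (set ys)"
| "freev (Neg \<phi>) = freev \<phi>"
| "freev (Conj I f) = (\<Union>i\<in>I. freev (f i))"
| "freev (Exi V \<phi>) = freev \<phi> - V"

primrec iwf :: "'n vocab \<Rightarrow> ('v set \<Rightarrow> bool) \<Rightarrow> ('v set \<Rightarrow> bool) \<Rightarrow> ('n, 'v) ifm \<Rightarrow> bool" where
  "iwf \<tau> CB QB (RelA P xs) = (Rel P (length xs) \<in> \<tau>)"
| "iwf \<tau> CB QB (EqA x y) = True"
| "iwf \<tau> CB QB (FunA F x ys) = (Fun F (length ys) \<in> \<tau>)"
| "iwf \<tau> CB QB (Neg \<phi>) = iwf \<tau> CB QB \<phi>"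
| "iwf \<tau> CB QB (Conj I f) = (CB I \<and> (\<forall>i\<in>I. iwf \<tau> CB QB (f i)))"
| "iwf \<tau> CB QB (Exi V \<phi>) = (QB V \<and> iwf \<tau> CB QB \<phi>)"

text \<open>Sentences of L_{lambda^+, aleph_0}(tau) and L_{lambda^+, lambda^+}(tau),
  lambda = |A|: conjunctions of at most lambda formulas, quantification over
  finitely many resp. at most lambda variables.\<close>

definition Lfin_sent :: "'u set \<Rightarrow> 'n vocab \<Rightarrow> ('n, 'u) ifm \<Rightarrow> bool" where
  "Lfin_sent A \<tau> \<phi> \<longleftrightarrow> iwf \<tau> (\<lambda>I. card_le I A) finite \<phi> \<and> freev \<phi> = {}"

definition Linf_sent :: "'u set \<Rightarrow> 'n vocab \<Rightarrow> ('n, 'u) ifm \<Rightarrow> bool" where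
  "Linf_sent A \<tau> \<phi> \<longleftrightarrow> iwf \<tau> (\<lambda>I. card_le I A) (\<lambda>V. card_le V A) \<phi> \<and> freev \<phi> = {}"

text \<open>L^{-1}_kappa = union over lambda < kappa of L_{lambda^+,aleph_0};
  L^0_kappa = union over lambda < kappa of L_{lambda^+,lambda^+}.\<close>

definition Lminus1 :: "'u set \<Rightarrow> 'n vocab \<Rightarrow> ('n, 'u) ifm set" where
  "Lminus1 K \<tau> = {\<phi>. \<exists>A::'u set. card_lt A K \<and> Lfin_sent A \<tau> \<phi>}"

definition Lzero :: "'u set \<Rightarrow> 'n vocab \<Rightarrow> ('n, 'u) ifm set" where
  "Lzero K \<tau> = {\<phi>. \<exists>A::'u set. card_lt A K \<and> Linf_sent A \<tau> \<phi>}"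

definition inf_le_logic ::
  "('n vocab \<Rightarrow> ('n, 'u) ifm set) \<Rightarrow> ('n vocab \<Rightarrow> 'x set) \<Rightarrow> (('n, 'u) struc \<Rightarrow> 'x \<Rightarrow> bool) \<Rightarrow> bool" where
  "inf_le_logic L1 Sent sat \<longleftrightarrow> (\<forall>\<tau>. \<forall>\<phi>\<in>L1 \<tau>. \<exists>\<psi>\<in>Sent \<tau>.
      \<forall>M. is_struc \<tau> M \<longrightarrow> ((\<forall>s. isat \<phi> M s) \<longleftrightarrow> sat M \<psi>))"

definition logic_le_inf ::
  "('n vocab \<Rightarrow> 'x set) \<Rightarrow> (('n, 'u) struc \<Rightarrow> 'x \<Rightarrow> bool) \<Rightarrow> ('n vocab \<Rightarrow> ('n, 'u) ifm set) \<Rightarrow> bool" where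
  "logic_le_inf Sent sat L2 \<longleftrightarrow> (\<forall>\<tau>. \<forall>\<psi>\<in>Sent \<tau>. \<exists>\<phi>\<in>L2 \<tau>.
      \<forall>M. is_struc \<tau> M \<longrightarrow> ((\<forall>s. isat \<phi> M s) \<longleftrightarrow> sat M \<psi>))"

end

theory Submission imports Defs begin

(* Let kappa = |K| be singular and let C be a cofinal subset of K
   with |C| < kappa.  For c in C let U c be the set of elements of K below c and let
   delta(U c) be the L^{-1}_kappa sentence, in the vocabulary of constants K, saying
   that the constants in U c are pairwise distinct.  Full substitution, applied to the
   L^{-1}_kappa sentence "all 0-ary relation symbols in C hold" with the symbol c
   replaced by delta(U c), together with the two comparisons with L^{-1}_kappa and
   L^0_kappa, yields a single L^0_kappa sentence chi equivalent to the conjunction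
   of all delta(U c), i.e. to "all constants in K are pairwise distinct" (C is
   cofinal).  But an L^0_kappa sentence mentions fewer than kappa function symbols,
   so identifying an unmentioned constant a0 with another constant a1 does not
   change the truth value of chi -- a contradiction. *)

unbundle cardinal_syntax

text \<open>Singular cardinals are uncountable, since aleph_0 is regular.\<close>

lemma singular_card_uncountable:
  assumes "singular_card K"
  shows "|UNIV::nat set| <o |K|"
proof (rule ccontr)
  assume "\<not> |UNIV::nat set| <o |K|"
  hence "|K| \<le>o |UNIV::nat set|" by (simp add: not_ordLess_iff_ordLeq card_of_Well_order)
  hence "|K| \<le>o natLeq" using card_of_nat ordLeq_ordIso_trans by blast
  moreover have "natLeq \<le>o |K|"
    using assms infinite_iff_natLeq_ordLeq unfolding singular_card_def by blast
  ultimately have "natLeq =o |K|" by (simp add: ordIso_iff_ordLeq)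
  hence "regularCard |K|" using regularCard_ordIso natLeq_Cinfinite regularCard_natLeq by blast
  thus False using assms unfolding singular_card_def by blast
qed

lemma singular_card_small_cofinal:
  assumes "singular_card K"
  obtains C where "C \<subseteq> K" "card_lt C K" "cofinal C |K|"
proof -
  from assms obtain C where C: "C \<subseteq> Field |K|" "cofinal C |K|" "\<not> |C| =o |K|"
    unfolding singular_card_def regularCard_def by blast
  hence "C \<subseteq> K" by (simp add: Field_card_of)
  hence "|C| <o |K|" using C(3) card_of_mono1 ordLeq_iff_ordLess_or_ordIso by blast
  thus thesis using that C \<open>C \<subseteq> K\<close> unfolding card_lt_def by blast
qed

lemma cofinal_common_strict_bound:
  assumes wo: "Well_order r" and cof: "cofinal C r" and a: "a0 \<in> Field r" "a1 \<in> Field r"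
  shows "\<exists>c\<in>C. a0 \<in> underS r c \<and> a1 \<in> underS r c"
proof -
  have below_larger: "a \<in> underS r b'" if "a \<in> underS r b" "(b, b') \<in> r" for a b b'
    using wo that unfolding underS_def well_order_on_def linear_order_on_def
      partial_order_on_def preorder_on_def by (auto dest: transD antisymD)
  obtain b0 where b0: "b0 \<in> C" "a0 \<in> underS r b0"
    using cof a(1) unfolding cofinal_def underS_def by blast
  obtain b1 where b1: "b1 \<in> C" "a1 \<in> underS r b1"
    using cof a(2) unfolding cofinal_def underS_def by blast
  have "b0 \<in> Field r" "b1 \<in> Field r" using b0(2) b1(2) by (auto simp: underS_def intro: FieldI2)
  hence "(b0, b1) \<in> r \<or> (b1, b0) \<in> r"
    using wo unfolding well_order_on_def linear_order_on_def partial_order_on_def preorder_on_def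
      total_on_def refl_on_def by (cases "b0 = b1") auto
  thus ?thesis using below_larger b0 b1 by blast
qed

lemma initial_segment_small:
  assumes "c \<in> K"
  shows "underS (card_of K) c \<subseteq> K" and "card_lt (underS (card_of K) c) K"
  using assms card_of_underS[OF card_of_Card_order, of c K] underS_Field[of _ "card_of K" c]
  by (auto simp: card_lt_def Field_card_of)

section \<open>Conjunctions of fewer than kappa sentences\<close>

definition prop_vocab :: "'n set \<Rightarrow> 'n vocab" where
  "prop_vocab C = {Rel c 0 | c. c \<in> C}"

definition prop_assignment :: "('n \<Rightarrow> 'x) \<Rightarrow> 'n sym \<Rightarrow> 'n list \<times> 'x" where
  "prop_assignment th \<sigma> = (case \<sigma> of Rel c n \<Rightarrow> ([], th c) | Fun c n \<Rightarrow> ([], undefined))"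

lemma prop_substitution:
  assumes "is_struc \<tau> M"
  shows "subst_defined sat (prop_vocab C) (prop_assignment th) M"
    and "is_struc (prop_vocab C) (subst_struc sat (prop_vocab C) (prop_assignment th) M)"
    and "c \<in> C \<Longrightarrow> [] \<in> rel (subst_struc sat (prop_vocab C) (prop_assignment th) M) c 0
           \<longleftrightarrow> sat M (th c)"
proof -
  have "expand_consts M [] [] = M" unfolding expand_consts_def by simp
  thus "c \<in> C \<Longrightarrow> [] \<in> rel (subst_struc sat (prop_vocab C) (prop_assignment th) M) c 0
           \<longleftrightarrow> sat M (th c)"
    by (simp add: subst_struc_def prop_vocab_def prop_assignment_def holds_at_def tuples_def)
  show "subst_defined sat (prop_vocab C) (prop_assignment th) M"
    unfolding subst_defined_def prop_vocab_def by auto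
  show "is_struc (prop_vocab C) (subst_struc sat (prop_vocab C) (prop_assignment th) M)"
    using assms unfolding is_struc_def subst_struc_def prop_vocab_def by (auto simp: tuples_def)
qed

text \<open>Substitute the sentences into the L^{-1}_kappa sentence
  "all letters in C hold".\<close>

lemma small_conjunction_in_Lzero:
  fixes Sent :: "'u vocab \<Rightarrow> 'x set" and sat :: "('u, 'u) struc \<Rightarrow> 'x \<Rightarrow> bool"
    and C K :: "'u set" and \<tau> :: "'u vocab"
  assumes L1: "inf_le_logic (Lminus1 K) Sent sat" and L2: "logic_le_inf Sent sat (Lzero K)"
    and FS: "full_substitution Sent sat"
    and small: "card_lt C K" and \<phi>: "\<forall>c\<in>C. \<phi> c \<in> Lminus1 K \<tau>"
  obtains \<chi> where "\<chi> \<in> Lzero K \<tau>"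
    "\<And>M. is_struc \<tau> M \<Longrightarrow> (\<forall>s. isat \<chi> M s) \<longleftrightarrow> (\<forall>c\<in>C. \<forall>s. isat (\<phi> c) M s)"
proof -
  define letters :: "('u, 'u) ifm" where "letters = Conj C (\<lambda>c. RelA c [])"
  have "Lfin_sent C (prop_vocab C) letters"
    unfolding Lfin_sent_def letters_def prop_vocab_def by (auto simp: card_le_def intro!: card_of_mono1)
  hence "letters \<in> Lminus1 K (prop_vocab C)" using small unfolding Lminus1_def by blast
  then obtain letters' where letters': "letters' \<in> Sent (prop_vocab C)"
    "\<And>N. is_struc (prop_vocab C) N \<Longrightarrow> (\<forall>s. isat letters N s) \<longleftrightarrow> sat N letters'"
    using L1 unfolding inf_le_logic_def by blast
  have "\<forall>c\<in>C. \<exists>\<psi>\<in>Sent \<tau>. \<forall>M. is_struc \<tau> M \<longrightarrow> ((\<forall>s. isat (\<phi> c) M s) \<longleftrightarrow> sat M \<psi>)"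
    using L1 \<phi> unfolding inf_le_logic_def by blast
  then obtain th where th: "\<And>c. c \<in> C \<Longrightarrow> th c \<in> Sent \<tau>"
    "\<And>c M. c \<in> C \<Longrightarrow> is_struc \<tau> M \<Longrightarrow> (\<forall>s. isat (\<phi> c) M s) \<longleftrightarrow> sat M (th c)"
    by metis
  let ?\<theta> = "prop_assignment th"
  have "subst_assignment Sent \<tau> (prop_vocab C) ?\<theta>"
    unfolding subst_assignment_def prop_assignment_def prop_vocab_def const_vocab_def
    using th(1) by auto
  then obtain \<psi> where \<psi>: "\<psi> \<in> Sent \<tau>" "\<And>M. is_struc \<tau> M \<and> subst_defined sat (prop_vocab C) ?\<theta> M
            \<Longrightarrow> sat M \<psi> \<longleftrightarrow> sat (subst_struc sat (prop_vocab C) ?\<theta> M) letters'"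
    using FS letters'(1) unfolding full_substitution_def by blast
  obtain \<chi> where \<chi>: "\<chi> \<in> Lzero K \<tau>" "\<And>M. is_struc \<tau> M \<Longrightarrow> (\<forall>s. isat \<chi> M s) \<longleftrightarrow> sat M \<psi>"
    using L2 \<psi>(1) unfolding logic_le_inf_def by blast
  have "(\<forall>s. isat \<chi> M s) \<longleftrightarrow> (\<forall>c\<in>C. \<forall>s. isat (\<phi> c) M s)" if M: "is_struc \<tau> M" for M
  proof -
    let ?N = "subst_struc sat (prop_vocab C) ?\<theta> M"
    have "(\<forall>s. isat \<chi> M s) \<longleftrightarrow> sat ?N letters'"
      using \<chi>(2) \<psi>(2) M prop_substitution(1)[OF M] by blast
    also have "\<dots> \<longleftrightarrow> (\<forall>c\<in>C. [] \<in> rel ?N c 0)"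
      using letters'(2)[OF prop_substitution(2)[where sat=sat and th=th, OF M]]
      unfolding letters_def by simp
    also have "\<dots> \<longleftrightarrow> (\<forall>c\<in>C. \<forall>s. isat (\<phi> c) M s)"
      using prop_substitution(3)[OF M] th(2)[OF _ M] by blast
    finally show ?thesis .
  qed
  thus thesis using that \<chi>(1) by blast
qed

section \<open>Sentences of L^0_kappa mention fewer than kappa constants\<close>

primrec fsyms :: "('n, 'v) ifm \<Rightarrow> 'n set" where
  "fsyms (RelA P xs) = {}"
| "fsyms (EqA x y) = {}"
| "fsyms (FunA F x ys) = {F}"
| "fsyms (Neg \<phi>) = fsyms \<phi>"
| "fsyms (Conj I f) = (\<Union>i\<in>I. fsyms (f i))"
| "fsyms (Exi V \<phi>) = fsyms \<phi>"

lemma fsyms_card_le: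
  fixes B :: "'b set"
  assumes "infinite B" "|A| \<le>o |B|"
  shows "iwf \<tau> (\<lambda>I. card_le I A) QB \<chi> \<Longrightarrow> |fsyms \<chi>| \<le>o |B|"
proof (induction \<chi>)
  case (FunA F x ys)
  then show ?case using assms(1) by (simp add: infinite_imp_nonempty card_of_singl_ordLeq)
next
  case (Conj I f)
  hence "|I| \<le>o |B|" using assms(2) ordLeq_transitive unfolding card_le_def by auto
  moreover have "\<forall>i\<in>I. |fsyms (f i)| \<le>o |B|" using Conj by auto
  ultimately show ?case using card_of_UNION_ordLeq_infinite[OF assms(1)] by simp
qed (auto simp: card_of_empty)

lemma isat_fsyms_cong:
  assumes "dom M = dom N" "rel M = rel N" "\<forall>F\<in>fsyms \<chi>. fn M F = fn N F"
  shows "isat \<chi> M s = isat \<chi> N s"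
  using assms by (induction \<chi> arbitrary: s) auto

text \<open>For uncountable K, a sentence of L^0_kappa has fewer than kappa function symbols:
  its conjunctions have at most |A| < kappa members.\<close>

lemma Lzero_fsyms_small:
  assumes uncountable: "|UNIV::nat set| <o |K|" and \<chi>: "\<chi> \<in> Lzero K \<tau>"
  shows "|fsyms \<chi>| <o |K|"
proof -
  obtain A where A: "card_lt A K" "Linf_sent A \<tau> \<chi>" using \<chi> unfolding Lzero_def by blast
  have "infinite K" using uncountable card_of_ordLeq_infinite ordLess_imp_ordLeq by blast
  hence "|A <+> (UNIV::nat set)| <o |K|"
    using card_of_Plus_ordLess_infinite A(1) uncountable unfolding card_lt_def by blast
  moreover have "infinite (A <+> (UNIV::nat set))" by simp
  hence "|fsyms \<chi>| \<le>o |A <+> (UNIV::nat set)|"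
    using fsyms_card_le[OF _ card_of_Plus1] A(2) unfolding Linf_sent_def by blast
  ultimately show ?thesis using ordLeq_ordLess_trans by blast
qed

definition const_set_vocab :: "'n set \<Rightarrow> 'n vocab" where
  "const_set_vocab K = {Fun a 0 | a. a \<in> K}"

definition const_struc :: "'u set \<Rightarrow> ('u \<Rightarrow> 'u) \<Rightarrow> ('u, 'u) struc" where
  "const_struc K f = \<lparr>dom = UNIV, rel = (\<lambda>_ _. {}),
     fn = (\<lambda>s n xs. if s \<in> K \<and> n = 0 \<and> xs = [] then f s else undefined)\<rparr>"

lemma const_struc_is_struc: "is_struc (const_set_vocab K) (const_struc K f)"
  unfolding is_struc_def const_struc_def const_set_vocab_def by (auto simp: tuples_def)

lemma const_struc_simps [simp]:
  "dom (const_struc K f) = UNIV"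
  "a \<in> K \<Longrightarrow> fn (const_struc K f) a 0 [] = f a"
  by (simp_all add: const_struc_def)

lemma Lzero_ignores_some_constant:
  assumes "|UNIV::nat set| <o |K|" and "\<chi> \<in> Lzero K \<tau>"
  obtains a0 where "a0 \<in> K"
    "\<And>f g s. (\<forall>a. a \<noteq> a0 \<longrightarrow> f a = g a) \<Longrightarrow> isat \<chi> (const_struc K f) s = isat \<chi> (const_struc K g) s"
proof -
  have "\<not> K \<subseteq> fsyms \<chi>"
    using Lzero_fsyms_small[OF assms] card_of_mono1 not_ordLess_ordLeq by blast
  then obtain a0 where a0: "a0 \<in> K" "a0 \<notin> fsyms \<chi>" by blast
  have "isat \<chi> (const_struc K f) s = isat \<chi> (const_struc K g) s"
    if "\<forall>a. a \<noteq> a0 \<longrightarrow> f a = g a" for f g s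
    using that a0(2) by (intro isat_fsyms_cong) (auto simp: const_struc_def fun_eq_iff)
  thus thesis using that a0(1) by blast
qed

text \<open>The sentence "the constants a and b differ", i.e. exists x. x = a and not x = b.\<close>

definition neq_consts :: "'u \<Rightarrow> 'u \<Rightarrow> ('u, 'u) ifm" where
  "neq_consts a b = Exi {a} (Conj {a, b} (\<lambda>i. if i = a then FunA a a [] else Neg (FunA b a [])))"

lemma isat_neq_consts:
  assumes "a \<noteq> b" "fn M a 0 [] \<in> dom M"
  shows "isat (neq_consts a b) M s \<longleftrightarrow> fn M a 0 [] \<noteq> fn M b 0 []"
  using assms by (auto simp: neq_consts_def intro!: exI[of _ "s(a := fn M a 0 [])"])

definition distinct_consts :: "'u set \<Rightarrow> ('u, 'u) ifm" where
  "distinct_consts U = Conj U (\<lambda>a. Conj (U - {a}) (\<lambda>b. neq_consts a b))"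

lemma isat_distinct_consts:
  assumes "\<forall>a\<in>U. fn M a 0 [] \<in> dom M"
  shows "(\<forall>s. isat (distinct_consts U) M s) \<longleftrightarrow> inj_on (\<lambda>a. fn M a 0 []) U"
proof -
  have "isat (neq_consts a b) M s \<longleftrightarrow> fn M a 0 [] \<noteq> fn M b 0 []" if "a \<in> U" "b \<in> U - {a}" for a b s
    using assms that isat_neq_consts[of a b M s] by auto
  hence "(\<forall>s. isat (distinct_consts U) M s) \<longleftrightarrow> (\<forall>a\<in>U. \<forall>b\<in>U - {a}. fn M a 0 [] \<noteq> fn M b 0 [])"
    unfolding distinct_consts_def by simp
  thus ?thesis unfolding inj_on_def by blast
qed

lemma distinct_consts_Lminus1:
  assumes "U \<subseteq> K" "card_lt U K"
  shows "distinct_consts U \<in> Lminus1 K (const_set_vocab K)"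
proof -
  have "Lfin_sent U (const_set_vocab K) (distinct_consts U)"
    using assms(1) unfolding Lfin_sent_def distinct_consts_def neq_consts_def const_set_vocab_def
    by (auto simp: card_le_def intro!: card_of_mono1)
  thus ?thesis using assms(2) unfolding Lminus1_def by blast
qed

lemma isat_distinct_consts_const_struc:
  assumes "U \<subseteq> K"
  shows "(\<forall>s. isat (distinct_consts U) (const_struc K f) s) \<longleftrightarrow> inj_on f U"
proof -
  have "inj_on (\<lambda>a. fn (const_struc K f) a 0 []) U \<longleftrightarrow> inj_on f U"
    using assms by (intro inj_on_cong) auto
  thus ?thesis using isat_distinct_consts[of U "const_struc K f"] by simp
qed

text \<open>No L^0_kappa sentence expresses that the constants of every initial segment below
  an element of a cofinal set C -- hence all constants of K -- are pairwise distinct: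
  it cannot tell the identity interpretation from one identifying an unmentioned
  constant a0 with some a1, and a0, a1 lie in a common segment.\<close>

lemma Lzero_cannot_express_distinctness:
  assumes K: "singular_card K" and C: "C \<subseteq> K" "cofinal C |K|"
    and \<chi>: "\<chi> \<in> Lzero K (const_set_vocab K)"
    and equiv: "\<And>M. is_struc (const_set_vocab K) M \<Longrightarrow>
      (\<forall>s. isat \<chi> M s) \<longleftrightarrow> (\<forall>c\<in>C. \<forall>s. isat (distinct_consts (underS (card_of K) c)) M s)"
  shows False
proof -
  define U where "U c = underS (card_of K) c" for c
  have segment: "(\<forall>s. isat (distinct_consts (U c)) (const_struc K f) s) \<longleftrightarrow> inj_on f (U c)"
    if "c \<in> C" for c f
  proof (rule isat_distinct_consts_const_struc)
    show "U c \<subseteq> K" using that C(1) initial_segment_small(1)[of c K] unfolding U_def by blast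
  qed
  have \<chi>_distinct: "(\<forall>s. isat \<chi> (const_struc K f) s) \<longleftrightarrow> (\<forall>c\<in>C. inj_on f (U c))" for f
    using equiv[OF const_struc_is_struc, of f] segment[of _ f] unfolding U_def by auto
  obtain a0 where a0: "a0 \<in> K" "\<And>f g s. (\<forall>a. a \<noteq> a0 \<longrightarrow> f a = g a) \<Longrightarrow>
      isat \<chi> (const_struc K f) s = isat \<chi> (const_struc K g) s"
    using Lzero_ignores_some_constant[OF singular_card_uncountable[OF K] \<chi>] by blast
  have "infinite (K - {a0})" using K unfolding singular_card_def by simp
  then obtain a1 where a1: "a1 \<in> K" "a1 \<noteq> a0"
    by (metis DiffD1 DiffD2 ex_in_conv infinite_imp_nonempty singletonI)
  obtain c where c: "c \<in> C" "a0 \<in> U c" "a1 \<in> U c"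
    using cofinal_common_strict_bound[OF card_of_Well_order C(2)] a0(1) a1(1)
    unfolding U_def Field_card_of by blast
  have "\<forall>s. isat \<chi> (const_struc K id) s" using \<chi>_distinct by simp
  hence "\<forall>s. isat \<chi> (const_struc K (id(a0 := a1))) s" using a0(2)[of id "id(a0 := a1)"] by simp
  hence "inj_on (id(a0 := a1)) (U c)" using \<chi>_distinct c(1) by blast
  thus False using inj_onD[of "id(a0 := a1)" "U c" a0 a1] c(2,3) a1(2) by simp
qed

text \<open>By substitution, "all constants of the segments below elements of C are distinct"
  is an L^0_kappa sentence; this contradicts the previous lemma.\<close>

theorem mainTheorem18:
  fixes K :: "'u set"
  assumes "singular_card K" and "strong_limit_card K"
  shows "\<not> (\<exists>(Sent :: 'u vocab \<Rightarrow> 'x set) (sat :: ('u, 'u) struc \<Rightarrow> 'x \<Rightarrow> bool).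
            is_logic Sent sat
            \<and> inf_le_logic (Lminus1 K) Sent sat
            \<and> logic_le_inf Sent sat (Lzero K)
            \<and> full_substitution Sent sat)"
proof
  assume "\<exists>(Sent :: 'u vocab \<Rightarrow> 'x set) (sat :: ('u, 'u) struc \<Rightarrow> 'x \<Rightarrow> bool).
            is_logic Sent sat \<and> inf_le_logic (Lminus1 K) Sent sat
            \<and> logic_le_inf Sent sat (Lzero K) \<and> full_substitution Sent sat"
  then obtain Sent :: "'u vocab \<Rightarrow> 'x set" and sat :: "('u, 'u) struc \<Rightarrow> 'x \<Rightarrow> bool"
    where L: "inf_le_logic (Lminus1 K) Sent sat" "logic_le_inf Sent sat (Lzero K)"
      "full_substitution Sent sat" by blast
  obtain C where C: "C \<subseteq> K" "card_lt C K" "cofinal C |K|"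
    using singular_card_small_cofinal[OF assms(1)] by blast
  have segments: "\<forall>c\<in>C. distinct_consts (underS (card_of K) c) \<in> Lminus1 K (const_set_vocab K)"
    using C(1) by (auto intro!: distinct_consts_Lminus1 initial_segment_small)
  obtain \<chi> where "\<chi> \<in> Lzero K (const_set_vocab K)" "\<And>M. is_struc (const_set_vocab K) M \<Longrightarrow>
      (\<forall>s. isat \<chi> M s) \<longleftrightarrow> (\<forall>c\<in>C. \<forall>s. isat (distinct_consts (underS (card_of K) c)) M s)"
    using small_conjunction_in_Lzero[OF L C(2) segments] by blast
  thus False using Lzero_cannot_express_distinctness[OF assms(1) C(1,3)] by blast
qed

end
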